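(* Let $q\in\Bbbk$ be arbitrary, let $M$ be any left $\mathcal H_n(q)$-module, and let the subspaces $U_1,\dots,U_{n-1}$ of $M$ be defined either by $U_i=\operatorname{Ker}(T_i-q)_M$ for all $i$, or by $U_i=\operatorname{Im}(T_i+1)_M$ for all $i$. For $0\le i<n$ put $$x_i=\sum_{\sigma\in\mathcal D_i}T_\sigma,\qquad y_i=\sum_{\sigma\in\mathcal D_i^\triangledown}(-1)^{\ell(\sigma)}q^{\,n-1-i-\ell(\sigma)}T_\sigma,$$ where $\mathcal D_i=\{e,\tau_i,\tau_{i-1}\tau_i,\dots,\tau_1\tau_2\cdots\tau_i\}$ and $\mathcal D_i^\triangledown=\{e,\tau_{i+1},\tau_{i+1}\tau_{i+2},\dots,\tau_{i+1}\tau_{i+2}\cdots\tau_{n-1}\}$. Then (i) $x_i$ maps $\Upsilon_i$ into $\Upsilon_{i+1}$ and $y_i$ maps $\Sigma_i$ into $\Sigma_{i+1}$; (ii) the element $x_iy_i$ induces a linear map $s_i:K_i\to K_{i+1}$ of the components of the complex $K_\bullet(M;(U_i))$; (iii) $\partial_{i+1}s_i+s_{i-1}\partial_i=[n]_q\,\mathrm{Id}$ on $K_i$ for $0\le i\le n$ (with $s_{-1}=0$, $s_n=0$, $\partial_0=0$, $\partial_{n+1}=0$). Consequently, if $[n]_q=1+q+\dots+q^{n-1}\neq0$, the complex $K_\bullet(M;(U_i))$ is exact.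
   Context: $\mathcal H_n(q)$ is the Hecke algebra over a field $\Bbbk$ with generators $T_1,\dots,T_{n-1}$, braid relations and $(T_i-q)(T_i+1)=0$ (here $q=0$ is allowed), with standard basis $T_\sigma$, $\sigma\in\mathfrak S_n$ ($T_e=1$, $T_{\tau_i\sigma}=T_iT_\sigma$ when $\ell(\tau_i\sigma)>\ell(\sigma)$, $\tau_i=(i,i+1)$). For $x\in\mathcal H_n$, $x_M$ denotes the operator by which $x$ acts on $M$. Given subspaces $U_1,\dots,U_{n-1}$ of a vector space $M$, the complex $K_\bullet(M;(U_i))$: $0\to K_n\to\dots\to K_i\xrightarrow{\partial_i}K_{i-1}\to\dots\to K_0\to0$ has $K_i=\Upsilon_i/(\Upsilon_i\cap\Sigma_i)$ for $0\le i\le n$, where $\Upsilon_i=\bigcap_{j<i}U_j$, $\Sigma_i=\sum_{j>i}U_j$ (with $\Upsilon_0=\Upsilon_1=M$ and $\Sigma_{n-1}=\Sigma_n=0$), and differentials induced by the inclusions $\Upsilon_i\subset\Upsilon_{i-1}$, $\Sigma_i\subset\Sigma_{i-1}$. *)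

theory Defs
  imports Complex_Main
begin

text \<open>A left module over the Hecke algebra H_n(q) over a field 'k: a 'k-vector space M
  (given by the scalar multiplication scale) together with linear operators T 1, ..., T (n-1)
  satisfying the defining relations of H_n(q).  (Generators-and-relations presentation.)\<close>

definition hecke_module ::
  "('k::field \<Rightarrow> 'm::ab_group_add \<Rightarrow> 'm) \<Rightarrow> nat \<Rightarrow> 'k \<Rightarrow> (nat \<Rightarrow> 'm \<Rightarrow> 'm) \<Rightarrow> bool" where
  "hecke_module scale n q T \<longleftrightarrow>
     vector_space scale \<and>
     (\<forall>i\<in>{1..<n}. Vector_Spaces.linear scale scale (T i)) \<and>
     (\<forall>i\<in>{1..<n}. \<forall>v. (\<lambda>w. T i w - scale q w) ((\<lambda>w. T i w + w) v) = 0) \<and>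
     (\<forall>i. 1 \<le> i \<and> i + 2 \<le> n \<longrightarrow> (\<forall>v. T i (T (Suc i) (T i v)) = T (Suc i) (T i (T (Suc i) v)))) \<and>
     (\<forall>i\<in>{1..<n}. \<forall>j\<in>{1..<n}. i + 2 \<le> j \<longrightarrow> (\<forall>v. T i (T j v) = T j (T i v)))"

text \<open>Action of T_w for a word w = [i1,...,ik] in the simple transpositions:
  T_{tau_i1 ... tau_ik} = T_i1 ... T_ik (for reduced words).\<close>
fun Tw :: "(nat \<Rightarrow> 'm \<Rightarrow> 'm) \<Rightarrow> nat list \<Rightarrow> 'm \<Rightarrow> 'm" where
  "Tw T [] v = v"
| "Tw T (i # w) v = T i (Tw T w v)"

text \<open>D_i = {e, tau_i, tau_(i-1) tau_i, ..., tau_1 ... tau_i}, as reduced words tau_j ... tau_i, 1 <= j <= i+1.\<close>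
definition Dset :: "nat \<Rightarrow> nat list set" where
  "Dset i = {[j..<Suc i] | j. 1 \<le> j \<and> j \<le> Suc i}"

text \<open>D_i^nabla = {e, tau_(i+1), ..., tau_(i+1) ... tau_(n-1)}, reduced words tau_(i+1) ... tau_(i+k).\<close>
definition Dnab :: "nat \<Rightarrow> nat \<Rightarrow> nat list set" where
  "Dnab n i = {[Suc i..<Suc i + k] | k. k \<le> n - 1 - i}"

text \<open>x_i and y_i acting on M; the length of the (reduced) word is the Coxeter length.\<close>
definition hx :: "(nat \<Rightarrow> 'm::ab_group_add \<Rightarrow> 'm) \<Rightarrow> nat \<Rightarrow> 'm \<Rightarrow> 'm" where
  "hx T i v = (\<Sum>w\<in>Dset i. Tw T w v)"

definition hy :: "('k::field \<Rightarrow> 'm::ab_group_add \<Rightarrow> 'm) \<Rightarrow> nat \<Rightarrow> 'k \<Rightarrow> (nat \<Rightarrow> 'm \<Rightarrow> 'm)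
    \<Rightarrow> nat \<Rightarrow> 'm \<Rightarrow> 'm" where
  "hy scale n q T i v =
     (\<Sum>w\<in>Dnab n i. scale ((-1) ^ length w * q ^ (n - 1 - i - length w)) (Tw T w v))"

definition Ups :: "(nat \<Rightarrow> 'm set) \<Rightarrow> nat \<Rightarrow> 'm set" where
  "Ups U i = (\<Inter>j\<in>{1..<i}. U j)"

definition Sig :: "('k::field \<Rightarrow> 'm::ab_group_add \<Rightarrow> 'm) \<Rightarrow> nat \<Rightarrow> (nat \<Rightarrow> 'm set) \<Rightarrow> nat \<Rightarrow> 'm set" where
  "Sig scale n U i = module.span scale (\<Union>j\<in>{Suc i..<n}. U j)"

text \<open>Equality in K_i = Upsilon_i / (Upsilon_i \<inter> Sigma_i) of the classes of a, b.\<close>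
definition Keq :: "('k::field \<Rightarrow> 'm::ab_group_add \<Rightarrow> 'm) \<Rightarrow> nat \<Rightarrow> (nat \<Rightarrow> 'm set) \<Rightarrow> nat \<Rightarrow> 'm \<Rightarrow> 'm \<Rightarrow> bool" where
  "Keq scale n U i a b \<longleftrightarrow> a - b \<in> Ups U i \<inter> Sig scale n U i"

text \<open>Exactness of K_n -> ... -> K_0 (with K_(n+1) = 0 and d_0 = 0), the differentials being
  induced by the inclusions: at K_i, every class [v] (v in Upsilon_i) with d_i [v] = 0 in K_(i-1)
  is d_(i+1) [w] for some w in Upsilon_(i+1).\<close>
definition K_exact :: "('k::field \<Rightarrow> 'm::ab_group_add \<Rightarrow> 'm) \<Rightarrow> nat \<Rightarrow> (nat \<Rightarrow> 'm set) \<Rightarrow> bool" where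
  "K_exact scale n U \<longleftrightarrow>
     (\<forall>i\<le>n. \<forall>v\<in>Ups U i. (i = 0 \<or> Keq scale n U (i - 1) v 0) \<longrightarrow>
        (\<exists>w\<in>(if i < n then Ups U (Suc i) else {0}). Keq scale n U i v w))"

definition qint :: "nat \<Rightarrow> 'k::field \<Rightarrow> 'k" where
  "qint n q = (\<Sum>k<n. q ^ k)"

end

theory Submission
  imports Defs
begin

text \<open>
  Reading off the defining sums, x_(i+1) = x_i T_(i+1) + 1 and y_i = q^(n-1-i) - T_(i+1) y_(i+1).
  Both choices of the U_i satisfy Im(T_i + 1) \<subseteq> U_i \<subseteq> Ker(T_i - q), and U_a is carried into U_b
  by every linear map C with T_b C = C T_a; with C = T_k (far commutation) and C = T_a T_(a+1)
  (braid relation) this gives the mapping properties (i) and (ii).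
  On \<Upsilon>_(i+1) the operator x_i acts as the scalar [i+1]_q, and by downward induction
  y_i \<equiv> [n-i]_q modulo \<Sigma>_i. Substituting the recursions, x_i y_i + x_(i-1) y_(i-1) becomes
  y_i + q^(n-i) [i]_q, which is [n-i]_q + q^(n-i) [i]_q = [n]_q modulo \<Sigma>_i. So s is a
  homotopy from [n]_q Id to 0, and the complex is exact when [n]_q is invertible.
\<close>

lemma Tw_append: "Tw T (xs @ ys) v = Tw T xs (Tw T ys v)"
  by (induction xs) auto

lemma hx_eq_sum: "hx T i v = (\<Sum>j=1..Suc i. Tw T [j..<Suc i] v)"
proof -
  have "Dset i = (\<lambda>j. [j..<Suc i]) ` {1..Suc i}"
    unfolding Dset_def by (auto simp del: upt.simps)
  moreover have "inj_on (\<lambda>j. [j..<Suc i]) {1..Suc i}"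
    by (rule inj_onI) (metis atLeastAtMost_iff diff_diff_cancel length_upt)
  ultimately show ?thesis
    unfolding hx_def by (simp add: sum.reindex del: upt.simps)
qed

lemma hx_0 [simp]: "hx T 0 v = v"
  by (simp add: hx_eq_sum)

lemma hx_Suc: "hx T (Suc i) v = hx T i (T (Suc i) v) + v"
proof -
  have "hx T (Suc i) v = (\<Sum>j=1..Suc i. Tw T [j..<Suc (Suc i)] v) + v"
    by (simp add: hx_eq_sum sum.cl_ivl_Suc)
  also have "(\<Sum>j=1..Suc i. Tw T [j..<Suc (Suc i)] v) = hx T i (T (Suc i) v)"
    unfolding hx_eq_sum by (rule sum.cong) (auto simp: Tw_append)
  finally show ?thesis .
qed

lemma hy_eq_sum:
  "hy scale n q T i v =
     (\<Sum>k\<le>n - 1 - i. scale ((-1) ^ k * q ^ (n - 1 - i - k)) (Tw T [Suc i..<Suc i + k] v))"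
proof -
  have "Dnab n i = (\<lambda>k. [Suc i..<Suc i + k]) ` {..n - 1 - i}"
    unfolding Dnab_def by (auto simp del: upt.simps)
  moreover have "inj_on (\<lambda>k. [Suc i..<Suc i + k]) {..n - 1 - i}"
    by (rule inj_onI) (metis add_diff_cancel_left' length_upt)
  ultimately show ?thesis
    unfolding hy_def by (simp add: sum.reindex del: upt.simps)
qed

lemma qint_Suc: "qint (Suc k) q = qint k q + q ^ k"
  by (simp add: qint_def)

lemma qint_add: "qint (a + b) q = qint a q + q ^ a * qint b q"
  by (induction b) (simp_all add: qint_def qint_Suc algebra_simps power_add)

lemma downward_induct [case_names top step]:
  assumes "\<And>i. m \<le> i \<Longrightarrow> P i" and "\<And>i. i < m \<Longrightarrow> P (Suc i) \<Longrightarrow> P i"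
  shows "P i"
proof (cases "m \<le> i")
  case False
  then have "i \<le> m" by simp
  then show ?thesis by (induction rule: inc_induct) (use assms in auto)
qed (use assms in auto)

locale hecke_rep = vector_space scale
  for scale :: "'k::field \<Rightarrow> 'm::ab_group_add \<Rightarrow> 'm" +
  fixes n :: nat and q :: 'k and T :: "nat \<Rightarrow> 'm \<Rightarrow> 'm"
  assumes T_hom: "1 \<le> i \<Longrightarrow> i < n \<Longrightarrow> module_hom scale scale (T i)"
    and T_quadratic: "1 \<le> i \<Longrightarrow> i < n \<Longrightarrow> T i (T i v + v) = scale q (T i v + v)"
    and T_braid: "1 \<le> i \<Longrightarrow> i + 2 \<le> n \<Longrightarrow>
      T i (T (Suc i) (T i v)) = T (Suc i) (T i (T (Suc i) v))"
    and T_commute: "1 \<le> i \<Longrightarrow> i + 2 \<le> j \<Longrightarrow> j < n \<Longrightarrow> T i (T j v) = T j (T i v)"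

lemma hecke_module_imp_hecke_rep:
  assumes "hecke_module scale n q T"
  shows "hecke_rep scale n q T"
proof -
  have "T i (T j v) = T j (T i v)" if "1 \<le> i" "i + 2 \<le> j" "j < n" for i j v
  proof -
    have "i \<in> {1..<n}" "j \<in> {1..<n}" using that by auto
    with assms that(2) show ?thesis unfolding hecke_module_def by blast
  qed
  with assms show ?thesis
    unfolding hecke_module_def hecke_rep_def hecke_rep_axioms_def
    by (auto simp: module_hom_iff_linear)
qed

context hecke_rep
begin

lemma T_add: "1 \<le> i \<Longrightarrow> i < n \<Longrightarrow> T i (x + y) = T i x + T i y"
  using module_hom.add[OF T_hom] by blast

lemma T_scale: "1 \<le> i \<Longrightarrow> i < n \<Longrightarrow> T i (scale c x) = scale c (T i x)"
  using module_hom.scale[OF T_hom] by blast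

lemma T_diff: "1 \<le> i \<Longrightarrow> i < n \<Longrightarrow> T i (x - y) = T i x - T i y"
  using module_hom.diff[OF T_hom] by blast

lemma hy_last: "n - 1 \<le> i \<Longrightarrow> hy scale n q T i v = v"
  by (simp add: hy_eq_sum)

lemma hx_add: "i < n \<Longrightarrow> hx T i (x + y) = hx T i x + hx T i y"
  by (induction i arbitrary: x y) (simp_all add: hx_Suc T_add algebra_simps)

lemma hx_scale: "i < n \<Longrightarrow> hx T i (scale c x) = scale c (hx T i x)"
  by (induction i arbitrary: x) (simp_all add: hx_Suc T_scale scale_right_distrib)

lemma hx_hom: "i < n \<Longrightarrow> module_hom scale scale (hx T i)"
  by (simp add: module_hom_iff module_axioms hx_add hx_scale)

lemma hy_Suc:
  assumes "Suc i < n"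
  shows "hy scale n q T i v = scale (q ^ (n - 1 - i)) v - T (Suc i) (hy scale n q T (Suc i) v)"
proof -
  define N where "N = n - 2 - i"
  have N: "n - 1 - i = Suc N" "n - 1 - Suc i = N" using assms unfolding N_def by auto
  have Tw_Suc: "Tw T [Suc i..<Suc (Suc (i + k))] v = T (Suc i) (Tw T [Suc (Suc i)..<Suc (Suc (i + k))] v)" for k
    by (simp add: upt_conv_Cons del: upt.simps)
  have "hy scale n q T i v = scale (q ^ Suc N) v
      + (\<Sum>k\<le>N. scale ((-1) ^ Suc k * q ^ (N - k)) (Tw T [Suc i..<Suc i + Suc k] v))"
    unfolding hy_eq_sum N(1) sum.atMost_Suc_shift by (simp del: upt.simps)
  also have "\<dots> = scale (q ^ Suc N) v
      - T (Suc i) (\<Sum>k\<le>N. scale ((-1) ^ k * q ^ (N - k)) (Tw T [Suc (Suc i)..<Suc (Suc i) + k] v))"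
    using assms by (simp add: Tw_Suc module_hom.sum[OF T_hom] T_scale sum_negf[symmetric] del: upt.simps)
  finally show ?thesis
    unfolding N hy_eq_sum[of _ _ _ _ "Suc i"] by simp
qed

lemma hy_add: "hy scale n q T i (x + y) = hy scale n q T i x + hy scale n q T i y"
proof (induction i rule: downward_induct[of "n - 1"])
  case (step i)
  then show ?case by (simp add: hy_Suc T_add scale_right_distrib algebra_simps)
qed (simp add: hy_last)

lemma hy_scale: "hy scale n q T i (scale c x) = scale c (hy scale n q T i x)"
proof (induction i rule: downward_induct[of "n - 1"])
  case (step i)
  then show ?case by (simp add: hy_Suc T_scale scale_right_diff_distrib scale_left_commute)
qed (simp add: hy_last)

lemma hy_hom: "module_hom scale scale (hy scale n q T i)"
  by (simp add: module_hom_iff module_axioms hy_add hy_scale)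

end

lemma (in vector_space) hom_image_span_subset:
  assumes "module_hom scale scale f" and "f ` S \<subseteq> span B"
  shows "f ` span S \<subseteq> span B"
  using assms module_hom.span_image[OF assms(1)] span_minimal[of "f ` S" "span B"]
  by (simp add: subspace_span)

locale hecke_flag = hecke_rep scale n q T
  for scale :: "'k::field \<Rightarrow> 'm::ab_group_add \<Rightarrow> 'm" and n q T +
  fixes U :: "nat \<Rightarrow> 'm set"
  assumes U_cases: "(\<forall>i\<in>{1..<n}. U i = {v. T i v - scale q v = 0})
                  \<or> (\<forall>i\<in>{1..<n}. U i = range (\<lambda>v. T i v + v))"
begin

lemma U_subspace:
  assumes "1 \<le> i" "i < n"
  shows "subspace (U i)"
proof -
  have "module_hom scale scale (\<lambda>v. T i v - scale q v)" "module_hom scale scale (\<lambda>v. T i v + v)"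
    using assms by (simp_all add: module_hom_iff module_axioms T_add T_scale algebra_simps scale_left_commute)
  then show ?thesis
    using U_cases assms module_hom.subspace_kernel module_hom.subspace_image[OF _ subspace_UNIV]
    by fastforce
qed

lemma T_on_U: "1 \<le> i \<Longrightarrow> i < n \<Longrightarrow> u \<in> U i \<Longrightarrow> T i u = scale q u"
  using U_cases T_quadratic by auto

lemma T_plus_id_in_U: "1 \<le> i \<Longrightarrow> i < n \<Longrightarrow> T i v + v \<in> U i"
  using U_cases T_quadratic by auto

lemma U_intertwine:
  assumes a: "1 \<le> a" "a < n" and b: "1 \<le> b" "b < n"
    and C: "module_hom scale scale C" and CT: "\<And>v. T b (C v) = C (T a v)"
    and u: "u \<in> U a"
  shows "C u \<in> U b"
  using U_cases
proof
  assume "\<forall>i\<in>{1..<n}. U i = {v. T i v - scale q v = 0}"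
  with a b u CT show ?thesis
    by (auto simp: module_hom.scale[OF C] module_hom.diff[OF C, symmetric] module_hom.zero[OF C])
next
  assume U: "\<forall>i\<in>{1..<n}. U i = range (\<lambda>v. T i v + v)"
  with a u obtain v where "u = T a v + v" by auto
  then have "C u = T b (C v) + C v" by (simp add: CT module_hom.add[OF C])
  with U b show ?thesis by auto
qed

lemma T_maps_U_far:
  assumes "1 \<le> k" "k < n" "1 \<le> j" "j < n" "k + 2 \<le> j \<or> j + 2 \<le> k" "u \<in> U j"
  shows "T k u \<in> U j"
  by (rule U_intertwine[of j j]) (use assms T_hom T_commute in auto)

lemma T_braid_maps_U:
  assumes "1 \<le> a" "a + 2 \<le> n" "u \<in> U a"
  shows "T a (T (Suc a) u) \<in> U (Suc a)"
proof (rule U_intertwine[of a "Suc a" "\<lambda>v. T a (T (Suc a) v)"])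
  show "module_hom scale scale (\<lambda>v. T a (T (Suc a) v))"
    using assms module_hom_compose[OF T_hom[of "Suc a"] T_hom[of a]] by (simp add: comp_def)
qed (use assms T_braid in auto)

lemma Ups_iff: "v \<in> Ups U i \<longleftrightarrow> (\<forall>j. 1 \<le> j \<longrightarrow> j < i \<longrightarrow> v \<in> U j)"
  by (auto simp: Ups_def)

lemma Ups_antimono: "j \<le> i \<Longrightarrow> Ups U i \<subseteq> Ups U j"
  by (auto simp: Ups_iff)

lemma Ups_subspace: "i \<le> n \<Longrightarrow> subspace (Ups U i)"
  unfolding Ups_def by (rule subspace_Int) (auto intro: U_subspace)

lemma Sig_subspace: "subspace (Sig scale n U i)"
  by (simp add: Sig_def subspace_span)

lemma Sig_antimono: "Sig scale n U (Suc i) \<subseteq> Sig scale n U i"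
  unfolding Sig_def by (rule span_mono) force

lemma U_subset_Sig: "i < j \<Longrightarrow> j < n \<Longrightarrow> U j \<subseteq> Sig scale n U i"
  unfolding Sig_def by (force intro!: span_base)

lemma Sig_top: "n - 1 \<le> i \<Longrightarrow> Sig scale n U i = {0}"
  by (simp add: Sig_def)

lemma hom_maps_Sig:
  assumes "module_hom scale scale f"
    and "\<And>j u. i < j \<Longrightarrow> j < n \<Longrightarrow> u \<in> U j \<Longrightarrow> f u \<in> Sig scale n U k"
    and "v \<in> Sig scale n U i"
  shows "f v \<in> Sig scale n U k"
proof -
  have "f ` (\<Union>j\<in>{Suc i..<n}. U j) \<subseteq> Sig scale n U k"
    using assms(2) by (auto simp: Suc_le_eq)
  then show ?thesis
    using hom_image_span_subset[OF assms(1)] assms(3) unfolding Sig_def by blast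
qed

lemma hx_maps_U_far: "m + 2 \<le> j \<Longrightarrow> j < n \<Longrightarrow> u \<in> U j \<Longrightarrow> hx T m u \<in> U j"
proof (induction m arbitrary: u)
  case (Suc m)
  then have "T (Suc m) u \<in> U j" by (intro T_maps_U_far) auto
  with Suc have "hx T m (T (Suc m) u) \<in> U j" by auto
  with Suc.prems show ?case using U_subspace[of j] by (simp add: hx_Suc subspace_add)
qed simp

lemma hx_in_U_top:
  assumes "Suc k < n" and "k = 0 \<or> w \<in> U k"
  shows "hx T (Suc k) w \<in> U (Suc k)"
proof (cases k)
  case 0
  then show ?thesis using assms T_plus_id_in_U[of 1 w] by (simp add: hx_Suc)
next
  case (Suc m)
  have "T (Suc m) (T (Suc (Suc m)) w) \<in> U (Suc (Suc m))"
    using assms Suc by (intro T_braid_maps_U) auto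
  then have "hx T m (T (Suc m) (T (Suc (Suc m)) w)) \<in> U (Suc (Suc m))"
    using assms Suc by (intro hx_maps_U_far) auto
  moreover have "T (Suc (Suc m)) w + w \<in> U (Suc (Suc m))"
    using assms Suc by (intro T_plus_id_in_U) auto
  ultimately show ?thesis
    using assms Suc U_subspace[of "Suc (Suc m)"] by (simp add: hx_Suc add.assoc subspace_add)
qed

lemma hx_maps_Ups: "i < n \<Longrightarrow> v \<in> Ups U i \<Longrightarrow> hx T i v \<in> Ups U (Suc i)"
proof (induction i arbitrary: v)
  case 0
  then show ?case by (simp add: Ups_iff)
next
  case (Suc i)
  have "T (Suc i) v \<in> Ups U i"
    using Suc.prems by (auto simp: Ups_iff intro!: T_maps_U_far)
  then have "hx T i (T (Suc i) v) \<in> Ups U (Suc i)" using Suc by simp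
  then have "hx T (Suc i) v \<in> Ups U (Suc i)"
    using Suc.prems Ups_subspace[of "Suc i"] by (simp add: hx_Suc subspace_add)
  moreover have "hx T (Suc i) v \<in> U (Suc i)"
    using Suc.prems by (cases "i = 0") (auto simp: Ups_iff intro!: hx_in_U_top)
  ultimately show ?case by (auto simp: Ups_iff less_Suc_eq)
qed

lemma hx_on_Ups: "m < n \<Longrightarrow> v \<in> Ups U (Suc m) \<Longrightarrow> hx T m v = scale (qint (Suc m) q) v"
proof (induction m)
  case (Suc m)
  have "T (Suc m) v = scale q v" using Suc.prems by (intro T_on_U) (auto simp: Ups_iff)
  moreover have "hx T m v = scale (qint (Suc m) q) v" using Suc by (auto simp: Ups_iff)
  ultimately show ?case
    using Suc.prems qint_add[of 1 "Suc m" q] by (simp add: hx_Suc hx_scale qint_def algebra_simps)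
qed (simp add: qint_def)

lemma hx_maps_Sig: "m < n \<Longrightarrow> m < i \<Longrightarrow> v \<in> Sig scale n U i \<Longrightarrow> hx T m v \<in> Sig scale n U i"
  by (rule hom_maps_Sig[OF hx_hom]) (auto intro!: hx_maps_U_far U_subset_Sig[THEN subsetD])

lemma hy_maps_U: "1 \<le> j \<Longrightarrow> j < i \<Longrightarrow> u \<in> U j \<Longrightarrow> hy scale n q T i u \<in> U j"
proof (induction i rule: downward_induct[of "n - 1"])
  case (step i)
  then have "T (Suc i) (hy scale n q T (Suc i) u) \<in> U j" by (intro T_maps_U_far) auto
  with step U_subspace[of j] show ?case
    by (simp add: hy_Suc subspace_diff subspace_scale)
qed (simp add: hy_last)

lemma hy_maps_Ups: "v \<in> Ups U i \<Longrightarrow> hy scale n q T i v \<in> Ups U i"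
  by (auto simp: Ups_iff intro: hy_maps_U)

lemma T_maps_Sig:
  "1 \<le> k \<Longrightarrow> k < i \<Longrightarrow> k < n \<Longrightarrow> v \<in> Sig scale n U i \<Longrightarrow> T k v \<in> Sig scale n U i"
  by (rule hom_maps_Sig[OF T_hom]) (auto intro!: T_maps_U_far U_subset_Sig[THEN subsetD])

lemma T_Suc_maps_Sig:
  assumes "Suc i < n" and "v \<in> Sig scale n U (Suc i)"
  shows "T (Suc i) v \<in> Sig scale n U i"
proof (rule hom_maps_Sig[OF T_hom _ assms(2)])
  fix j u assume "Suc i < j" "j < n" "u \<in> U j"
  then have "T (Suc i) u + u \<in> Sig scale n U i" "u \<in> Sig scale n U i"
    using assms T_plus_id_in_U[of "Suc i" u] U_subset_Sig[of i "Suc i"] U_subset_Sig[of i j] by auto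
  then have "(T (Suc i) u + u) - u \<in> Sig scale n U i"
    using Sig_subspace by (blast intro: subspace_diff)
  then show "T (Suc i) u \<in> Sig scale n U i" by simp
qed (use assms in auto)

lemma hy_on_U_next:
  assumes i: "Suc i < n" and u: "u \<in> U (Suc i)"
  shows "hy scale n q T i u \<in> Sig scale n U (Suc i)"
proof (cases "Suc (Suc i) < n")
  case False
  then have "n - 1 - i = 1" using i by simp
  then have "hy scale n q T i u = 0"
    using i T_on_U[OF _ i u] by (simp add: hy_Suc hy_last)
  then show ?thesis using Sig_subspace subspace_0 by simp
next
  case True
  define z where "z = hy scale n q T (Suc (Suc i)) u"
  have "n - Suc i = Suc (n - Suc (Suc i))" using True by simp
  \<comment> \<open>T_(i+1) acts as q on u, so the two scalar terms of the recursion cancel\<close>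
  then have "hy scale n q T i u = T (Suc i) (T (Suc (Suc i)) z)"
    using True i T_on_U[OF _ i u] by (simp add: z_def hy_Suc T_diff T_scale mult.commute)
  moreover have "T (Suc i) (T (Suc (Suc i)) z) \<in> U (Suc (Suc i))"
    using True u unfolding z_def by (intro T_braid_maps_U hy_maps_U) auto
  ultimately show ?thesis using True U_subset_Sig by auto
qed

lemma hy_maps_Sig: "i < n \<Longrightarrow> v \<in> Sig scale n U i \<Longrightarrow> hy scale n q T i v \<in> Sig scale n U (Suc i)"
proof (induction i arbitrary: v rule: downward_induct[of "n - 1"])
  case (top i)
  then have "v = 0" using Sig_top by auto
  then show ?case using Sig_subspace subspace_0 module_hom.zero[OF hy_hom] by simp
next
  case (step i)
  show ?case
  proof (rule hom_maps_Sig[OF hy_hom _ step.prems(2)])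
    fix j u assume j: "i < j" "j < n" and u: "u \<in> U j"
    show "hy scale n q T i u \<in> Sig scale n U (Suc i)"
    proof (cases "j = Suc i")
      case True
      with j u show ?thesis by (intro hy_on_U_next) auto
    next
      case False
      then have "u \<in> Sig scale n U (Suc i)" using j u U_subset_Sig[of "Suc i" j] by auto
      then have "T (Suc i) (hy scale n q T (Suc i) u) \<in> Sig scale n U (Suc (Suc i))"
        using step by (intro T_maps_Sig) auto
      then have "T (Suc i) (hy scale n q T (Suc i) u) \<in> Sig scale n U (Suc i)"
        using Sig_antimono by blast
      with \<open>u \<in> Sig scale n U (Suc i)\<close> show ?thesis
        using step Sig_subspace by (simp add: hy_Suc subspace_diff subspace_scale)
    qed
  qed
qed

lemma hy_congruence: "i < n \<Longrightarrow> hy scale n q T i v - scale (qint (n - i) q) v \<in> Sig scale n U i"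
proof (induction i rule: downward_induct[of "n - 1"])
  case (top i)
  then have "n - i = 1" by simp
  then show ?case using Sig_subspace subspace_0 by (simp add: hy_last qint_def)
next
  case (step i)
  then have i: "Suc i < n" by simp
  define k where "k = n - Suc i"
  define s where "s = hy scale n q T (Suc i) v - scale (qint k q) v"
  have s: "s \<in> Sig scale n U (Suc i)" using step i unfolding s_def k_def by simp
  have k: "n - i = Suc k" "n - Suc i = k" using i unfolding k_def by auto
  have "hy scale n q T i v - scale (qint (n - i) q) v
      = - (T (Suc i) s + scale (qint k q) (T (Suc i) v + v))"
    using i by (simp add: k s_def qint_Suc hy_Suc T_diff T_scale algebra_simps)
  moreover have "T (Suc i) s \<in> Sig scale n U i" using i s by (rule T_Suc_maps_Sig)
  moreover have "T (Suc i) v + v \<in> Sig scale n U i"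
    using i T_plus_id_in_U[of "Suc i" v] U_subset_Sig[of i "Suc i"] by auto
  ultimately show ?case
    using Sig_subspace by (metis subspace_neg subspace_add subspace_scale)
qed

lemma hx_hy_maps_Ups: "i < n \<Longrightarrow> v \<in> Ups U i \<Longrightarrow> hx T i (hy scale n q T i v) \<in> Ups U (Suc i)"
  by (simp add: hx_maps_Ups hy_maps_Ups)

lemma hx_hy_maps_Sig:
  "i < n \<Longrightarrow> v \<in> Sig scale n U i \<Longrightarrow> hx T i (hy scale n q T i v) \<in> Sig scale n U (Suc i)"
  by (simp add: hx_maps_Sig hy_maps_Sig)

lemma homotopy_interior:
  assumes m: "Suc m < n" and v: "v \<in> Ups U (Suc m)"
  shows "hx T (Suc m) (hy scale n q T (Suc m) v) + hx T m (hy scale n q T m v) - scale (qint n q) v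
    \<in> Sig scale n U (Suc m)"
proof -
  define z where "z = hy scale n q T (Suc m) v"
  have "hx T m (hy scale n q T m v) = scale (q ^ (n - Suc m) * qint (Suc m) q) v - hx T m (T (Suc m) z)"
    using m v by (simp add: z_def hy_Suc module_hom.diff[OF hx_hom] hx_scale hx_on_Ups)
  moreover have "qint n q = qint (n - Suc m) q + q ^ (n - Suc m) * qint (Suc m) q"
    using m qint_add[of "n - Suc m" "Suc m" q] by simp
  ultimately have "hx T (Suc m) z + hx T m (hy scale n q T m v) - scale (qint n q) v
      = z - scale (qint (n - Suc m) q) v"
    by (simp add: hx_Suc algebra_simps)
  with hy_congruence[of "Suc m" v] m show ?thesis by (simp add: z_def)
qed

lemma homotopy_formula:
  assumes i: "i \<le> n" and v: "v \<in> Ups U i"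
  shows "Keq scale n U i
      ((if i < n then hx T i (hy scale n q T i v) else 0)
       + (if 0 < i then hx T (i - 1) (hy scale n q T (i - 1) v) else 0))
      (scale (qint n q) v)"
proof -
  define A where "A = (if i < n then hx T i (hy scale n q T i v) else 0)"
  define B where "B = (if 0 < i then hx T (i - 1) (hy scale n q T (i - 1) v) else 0)"
  have "A \<in> Ups U i"
    using hx_hy_maps_Ups[OF _ v] Ups_antimono[of i "Suc i"] Ups_subspace[OF i]
    by (auto simp: A_def subspace_0)
  moreover have "B \<in> Ups U i"
  proof (cases "0 < i")
    case True
    then have "v \<in> Ups U (i - 1)" using v Ups_antimono[of "i - 1" i] by auto
    then show ?thesis using True i hx_hy_maps_Ups[of "i - 1" v] by (simp add: B_def)
  qed (simp add: B_def Ups_def)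
  ultimately have "A + B - scale (qint n q) v \<in> Ups U i"
    using v Ups_subspace[OF i] by (simp add: subspace_add subspace_diff subspace_scale)
  moreover have "A + B - scale (qint n q) v \<in> Sig scale n U i"
  proof -
    consider "i = 0" | "i = n" "0 < n" | m where "i = Suc m" "Suc m < n"
      using i by (metis Suc_pred le_neq_implies_less not_gr_zero)
    then show ?thesis
    proof cases
      case 1
      then show ?thesis
        using hy_congruence[of 0 v] Sig_subspace subspace_0
        by (cases "n = 0") (simp_all add: A_def B_def qint_def)
    next
      case 2
      then have "B = scale (qint n q) v"
        using v hx_on_Ups[of "n - 1" v] by (simp add: B_def hy_last)
      then show ?thesis using 2 Sig_subspace subspace_0 by (simp add: A_def)
    next
      case 3
      then show ?thesis using homotopy_interior[of m v] v by (simp add: A_def B_def)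
    qed
  qed
  ultimately show ?thesis by (simp add: Keq_def A_def B_def)
qed

lemma K_exact_if_qint_nonzero:
  assumes c: "qint n q \<noteq> 0"
  shows "K_exact scale n U"
  unfolding K_exact_def
proof (intro allI impI ballI)
  fix i v assume i: "i \<le> n" and v: "v \<in> Ups U i" and cycle: "i = 0 \<or> Keq scale n U (i - 1) v 0"
  have n: "0 < n" using c by (cases n) (auto simp: qint_def)
  have Keq_refl: "Keq scale n U i w w" for w
    using Ups_subspace[OF i] Sig_subspace subspace_0 by (simp add: Keq_def)
  show "\<exists>w\<in>(if i < n then Ups U (Suc i) else {0}). Keq scale n U i v w"
  proof (cases "i = 0")
    case True
    with n Keq_refl show ?thesis by (auto simp: Ups_def)
  next
    case False
    define A where "A = (if i < n then hx T i (hy scale n q T i v) else 0)"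
    have "v \<in> Sig scale n U (i - 1)" using False cycle by (simp add: Keq_def)
    then have "hx T (i - 1) (hy scale n q T (i - 1) v) \<in> Sig scale n U i"
      using False i hx_hy_maps_Sig[of "i - 1" v] by simp
    moreover have "A + hx T (i - 1) (hy scale n q T (i - 1) v) - scale (qint n q) v \<in> Sig scale n U i"
      using homotopy_formula[OF i v] False by (simp add: A_def Keq_def)
    ultimately have "A - scale (qint n q) v \<in> Sig scale n U i"
      using Sig_subspace[of i] subspace_diff by fastforce
    then have "scale (inverse (qint n q)) (A - scale (qint n q) v) \<in> Sig scale n U i"
      using Sig_subspace by (rule subspace_scale[rotated])
    then have homologous: "v - scale (inverse (qint n q)) A \<in> Sig scale n U i"
      using c Sig_subspace[of i] subspace_neg by (fastforce simp: scale_right_diff_distrib)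
    show ?thesis
    proof (cases "i < n")
      case True
      define w where "w = scale (inverse (qint n q)) A"
      have w: "w \<in> Ups U (Suc i)"
        using True hx_hy_maps_Ups[OF True v] Ups_subspace[of "Suc i"]
        by (simp add: w_def A_def subspace_scale)
      then have "v - w \<in> Ups U i"
        using v Ups_antimono[of i "Suc i"] Ups_subspace[OF i] by (auto intro: subspace_diff)
      with True w homologous show ?thesis by (auto simp: Keq_def w_def)
    next
      case False
      then have "v = 0" using homologous Sig_top[of i] i by (simp add: A_def)
      with False Keq_refl show ?thesis by simp
    qed
  qed
qed

end

theorem lemma2p1:
  fixes scale :: "'k::field \<Rightarrow> 'm::ab_group_add \<Rightarrow> 'm" and n :: nat and q :: 'k
    and T :: "nat \<Rightarrow> 'm \<Rightarrow> 'm" and U :: "nat \<Rightarrow> 'm set"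
  assumes H: "hecke_module scale n q T" and n: "1 \<le> n"
    and U: "(\<forall>i\<in>{1..<n}. U i = {v. T i v - scale q v = 0})
          \<or> (\<forall>i\<in>{1..<n}. U i = range (\<lambda>v. T i v + v))"
  shows
    \<comment> \<open>(i)\<close>
    "(\<forall>i<n. (\<forall>v\<in>Ups U i. hx T i v \<in> Ups U (Suc i))
           \<and> (\<forall>v\<in>Sig scale n U i. hy scale n q T i v \<in> Sig scale n U (Suc i)))
     \<comment> \<open>(ii): x_i y_i induces a linear map s_i : K_i \<rightarrow> K_(i+1)\<close>
     \<and> (\<forall>i<n. Vector_Spaces.linear scale scale (\<lambda>v. hx T i (hy scale n q T i v))
           \<and> (\<forall>v\<in>Ups U i. hx T i (hy scale n q T i v) \<in> Ups U (Suc i))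
           \<and> (\<forall>v\<in>Ups U i \<inter> Sig scale n U i.
                 hx T i (hy scale n q T i v) \<in> Ups U (Suc i) \<inter> Sig scale n U (Suc i)))
     \<comment> \<open>(iii): d_(i+1) s_i + s_(i-1) d_i = [n]_q Id on K_i, with s_(-1) = 0, s_n = 0\<close>
     \<and> (\<forall>i\<le>n. \<forall>v\<in>Ups U i.
           Keq scale n U i
             ((if i < n then hx T i (hy scale n q T i v) else 0)
              + (if 0 < i then hx T (i - 1) (hy scale n q T (i - 1) v) else 0))
             (scale (qint n q) v))
     \<comment> \<open>consequence: exactness\<close>
     \<and> (qint n q \<noteq> 0 \<longrightarrow> K_exact scale n U)"
proof -
  interpret hecke_flag scale n q T U
    using hecke_module_imp_hecke_rep[OF H] U by (simp add: hecke_flag_def hecke_flag_axioms_def)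
  have "Vector_Spaces.linear scale scale (\<lambda>v. hx T i (hy scale n q T i v))" if "i < n" for i
    using module_hom_compose[OF hy_hom hx_hom[OF that]] by (simp add: comp_def module_hom_iff_linear)
  then show ?thesis
    using hx_maps_Ups hy_maps_Sig hx_hy_maps_Ups hx_hy_maps_Sig homotopy_formula K_exact_if_qint_nonzero
    by simp
qed

end
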